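(* Let $S=k[x_{1,0},\ldots,x_{1,n_1},\ldots,x_{m,0},\ldots,x_{m,n_m}]$, $T=k[X_{1,0},\ldots,X_{1,n_1},\ldots,X_{m,0},\ldots,X_{m,n_m}]$, and for $i=1,\ldots,m$ let $S^{[i]}=k[x_{i,0},\ldots,x_{i,n_i}]$, $T^{[i]}=k[X_{i,0},\ldots,X_{i,n_i}]$, $F_i\in S^{[i]}_d$ and $F=F_1+\cdots+F_m\in S_d$. For each $i$ let $I^{[i]}\subsetneq T^{[i]}$ be a proper homogeneous ideal and $t_i\in I^{[i]}$ homogeneous, all $t_i$ of the same degree. Regarding each $F_i$ as a form in $S$ (so $F_i^\perp=\{g\in T: g\circ F_i=0\}$) and each $I^{[i]}$ as generating an ideal of $T$, set $J_i=(F_i^\perp : I^{[i]})+(t_i)\subset T$. Then for all $a_1,\ldots,a_m\in k$, \[(F^\perp : (I^{[1]}+ \cdots+ I^{[m]}) )+(a_1t_1+ \cdots+ a_mt_m) \subseteq J_1 \cap \cdots \cap J_m .\]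
   Context: $k$ is algebraically closed of characteristic zero; $T$ acts on $S$ by differentiation ($X_{i,j}\circ F=\partial F/\partial x_{i,j}$), and $F^\perp=\{g\in T: g\circ F=0\}$. *)

theory Defs
  imports "HOL-Library.Poly_Mapping" "HOL-Computational_Algebra.Polynomial"
begin

text \<open>Polynomials in the variables x_(i,j) (resp. X_(i,j)), indexed by pairs (i,j),
  represented as finitely supported maps from monomials (exponent vectors) to coefficients.\<close>

type_synonym 'k mpoly = "((nat \<times> nat) \<Rightarrow>\<^sub>0 nat) \<Rightarrow>\<^sub>0 'k"

definition alg_closed_field :: "'k::field itself \<Rightarrow> bool" where
  "alg_closed_field _ \<longleftrightarrow> (\<forall>p :: 'k poly. degree p > 0 \<longrightarrow> (\<exists>x. poly p x = 0))"

definition polys :: "(nat \<times> nat) set \<Rightarrow> 'k::zero mpoly set" where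
  "polys V = {p. \<forall>\<mu>\<in>Poly_Mapping.keys p. Poly_Mapping.keys \<mu> \<subseteq> V}"

definition mdeg :: "((nat \<times> nat) \<Rightarrow>\<^sub>0 nat) \<Rightarrow> nat" where
  "mdeg \<mu> = (\<Sum>v\<in>Poly_Mapping.keys \<mu>. Poly_Mapping.lookup \<mu> v)"

definition homog :: "nat \<Rightarrow> 'k::zero mpoly \<Rightarrow> bool" where
  "homog d p \<longleftrightarrow> (\<forall>\<mu>\<in>Poly_Mapping.keys p. mdeg \<mu> = d)"

definition hcomp :: "nat \<Rightarrow> 'k::comm_monoid_add mpoly \<Rightarrow> 'k mpoly" where
  "hcomp d p = (\<Sum>\<mu>\<in>{\<mu>\<in>Poly_Mapping.keys p. mdeg \<mu> = d}. Poly_Mapping.single \<mu> (Poly_Mapping.lookup p \<mu>))"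

definition const :: "'k::zero \<Rightarrow> 'k mpoly" where
  "const c = Poly_Mapping.single 0 c"

definition is_ideal :: "'k::comm_ring_1 mpoly set \<Rightarrow> 'k mpoly set \<Rightarrow> bool" where
  "is_ideal R I \<longleftrightarrow> I \<subseteq> R \<and> 0 \<in> I \<and> (\<forall>x\<in>I. \<forall>y\<in>I. x + y \<in> I)
     \<and> (\<forall>r\<in>R. \<forall>x\<in>I. r * x \<in> I)"

definition homogeneous_set :: "'k::comm_ring_1 mpoly set \<Rightarrow> bool" where
  "homogeneous_set I \<longleftrightarrow> (\<forall>p\<in>I. \<forall>d. hcomp d p \<in> I)"

definition gen_ideal :: "'k::comm_ring_1 mpoly set \<Rightarrow> 'k mpoly set \<Rightarrow> 'k mpoly set" where
  "gen_ideal R A = {p. \<exists>L. set L \<subseteq> R \<times> A \<and> p = sum_list (map (\<lambda>(r, a). r * a) L)}"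

definition ideal_sum :: "'k::comm_ring_1 mpoly set \<Rightarrow> 'k mpoly set \<Rightarrow> 'k mpoly set" where
  "ideal_sum A B = {x + y | x y. x \<in> A \<and> y \<in> B}"

definition colon :: "'k::comm_ring_1 mpoly set \<Rightarrow> 'k mpoly set \<Rightarrow> 'k mpoly set \<Rightarrow> 'k mpoly set" where
  "colon R A B = {g\<in>R. \<forall>h\<in>B. g * h \<in> A}"

text \<open>Action by differentiation: X^alpha applied to x^beta.\<close>
definition mono_le :: "((nat \<times> nat) \<Rightarrow>\<^sub>0 nat) \<Rightarrow> ((nat \<times> nat) \<Rightarrow>\<^sub>0 nat) \<Rightarrow> bool" where
  "mono_le \<alpha> \<beta> \<longleftrightarrow> (\<forall>v. Poly_Mapping.lookup \<alpha> v \<le> Poly_Mapping.lookup \<beta> v)"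

definition dcoef :: "((nat \<times> nat) \<Rightarrow>\<^sub>0 nat) \<Rightarrow> ((nat \<times> nat) \<Rightarrow>\<^sub>0 nat) \<Rightarrow> 'k::field_char_0" where
  "dcoef \<alpha> \<beta> = (\<Prod>v\<in>Poly_Mapping.keys \<beta>. of_nat (fact (Poly_Mapping.lookup \<beta> v)) / of_nat (fact (Poly_Mapping.lookup \<beta> v - Poly_Mapping.lookup \<alpha> v)))"

definition contract :: "'k::field_char_0 mpoly \<Rightarrow> 'k mpoly \<Rightarrow> 'k mpoly" (infixl \<open>\<circ>\<^sub>d\<close> 70) where
  "g \<circ>\<^sub>d F = (\<Sum>\<alpha>\<in>Poly_Mapping.keys g. \<Sum>\<beta>\<in>Poly_Mapping.keys F.
      if mono_le \<alpha> \<beta> then Poly_Mapping.single (\<beta> - \<alpha>) (Poly_Mapping.lookup g \<alpha> * Poly_Mapping.lookup F \<beta> * dcoef \<alpha> \<beta>) else 0)"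

definition perp :: "'k::field_char_0 mpoly set \<Rightarrow> 'k mpoly \<Rightarrow> 'k mpoly set" where
  "perp T F = {g\<in>T. g \<circ>\<^sub>d F = 0}"

end

theory Submission imports Defs begin

text \<open>Write the given element of (a_1 t_1 + ... + a_m t_m) as R a_i t_i + w. The t_j lie in
  proper homogeneous ideals, so they have no constant term; hence every monomial of
  w = \<Sum>_{j \<noteq> i} R a_j t_j contains a variable outside block i, and w u annihilates F_i for
  every u. For the same reason every u in the ideal generated by I_i annihilates each F_j with
  j \<noteq> i, so g u \<circ> F = 0 forces g u \<circ> F_i = 0. Hence g + w lies in (F_i^\<bottom> : I_i).\<close>

lemma keys_add_exponents:
  "Poly_Mapping.keys ((\<alpha>::(nat \<times> nat) \<Rightarrow>\<^sub>0 nat) + \<beta>) = Poly_Mapping.keys \<alpha> \<union> Poly_Mapping.keys \<beta>"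
  by (auto simp: in_keys_iff lookup_add)

definition contract_term ::
    "'k::field_char_0 mpoly \<Rightarrow> 'k mpoly \<Rightarrow> ((nat \<times> nat) \<Rightarrow>\<^sub>0 nat) \<Rightarrow> ((nat \<times> nat) \<Rightarrow>\<^sub>0 nat) \<Rightarrow> 'k mpoly" where
  "contract_term g F \<alpha> \<beta> = (if mono_le \<alpha> \<beta>
     then Poly_Mapping.single (\<beta> - \<alpha>) (Poly_Mapping.lookup g \<alpha> * Poly_Mapping.lookup F \<beta> * dcoef \<alpha> \<beta>)
     else 0)"

lemma contract_term_add_left:
  "contract_term (g1 + g2) F \<alpha> \<beta> = contract_term g1 F \<alpha> \<beta> + contract_term g2 F \<alpha> \<beta>"
  by (simp add: contract_term_def lookup_add distrib_right single_add)

lemma contract_term_add_right: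
  "contract_term g (F1 + F2) \<alpha> \<beta> = contract_term g F1 \<alpha> \<beta> + contract_term g F2 \<alpha> \<beta>"
  by (simp add: contract_term_def lookup_add distrib_left distrib_right single_add)

lemma contract_term_eq_0:
  "\<alpha> \<notin> Poly_Mapping.keys g \<or> \<beta> \<notin> Poly_Mapping.keys F \<Longrightarrow> contract_term g F \<alpha> \<beta> = 0"
  by (auto simp: contract_term_def in_keys_iff)

lemma contract_eq_sum_superset:
  assumes "finite A" "Poly_Mapping.keys g \<subseteq> A" "finite B" "Poly_Mapping.keys F \<subseteq> B"
  shows "g \<circ>\<^sub>d F = (\<Sum>\<alpha>\<in>A. \<Sum>\<beta>\<in>B. contract_term g F \<alpha> \<beta>)"
proof -
  have "g \<circ>\<^sub>d F = (\<Sum>\<alpha>\<in>Poly_Mapping.keys g. \<Sum>\<beta>\<in>Poly_Mapping.keys F. contract_term g F \<alpha> \<beta>)"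
    unfolding contract_def contract_term_def ..
  also have "\<dots> = (\<Sum>\<alpha>\<in>Poly_Mapping.keys g. \<Sum>\<beta>\<in>B. contract_term g F \<alpha> \<beta>)"
    by (intro sum.cong refl sum.mono_neutral_left) (use assms in \<open>auto simp: contract_term_eq_0\<close>)
  also have "\<dots> = (\<Sum>\<alpha>\<in>A. \<Sum>\<beta>\<in>B. contract_term g F \<alpha> \<beta>)"
    by (intro sum.mono_neutral_left) (use assms in \<open>auto intro!: sum.neutral simp: contract_term_eq_0\<close>)
  finally show ?thesis .
qed

lemma contract_add_left: "(g1 + g2) \<circ>\<^sub>d F = g1 \<circ>\<^sub>d F + g2 \<circ>\<^sub>d (F :: 'k::field_char_0 mpoly)"
proof -
  let ?A = "Poly_Mapping.keys g1 \<union> Poly_Mapping.keys g2"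
  have expand: "Poly_Mapping.keys g \<subseteq> ?A \<Longrightarrow>
      g \<circ>\<^sub>d F = (\<Sum>\<alpha>\<in>?A. \<Sum>\<beta>\<in>Poly_Mapping.keys F. contract_term g F \<alpha> \<beta>)" for g
    by (rule contract_eq_sum_superset) auto
  show ?thesis
    by (simp add: expand[OF keys_add] expand[of g1] expand[of g2] contract_term_add_left sum.distrib)
qed

lemma contract_add_right: "g \<circ>\<^sub>d (F1 + F2) = g \<circ>\<^sub>d F1 + g \<circ>\<^sub>d (F2 :: 'k::field_char_0 mpoly)"
proof -
  let ?B = "Poly_Mapping.keys F1 \<union> Poly_Mapping.keys F2"
  have expand: "Poly_Mapping.keys F \<subseteq> ?B \<Longrightarrow>
      g \<circ>\<^sub>d F = (\<Sum>\<alpha>\<in>Poly_Mapping.keys g. \<Sum>\<beta>\<in>?B. contract_term g F \<alpha> \<beta>)" for F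
    by (rule contract_eq_sum_superset) auto
  show ?thesis
    by (simp add: expand[OF keys_add] expand[of F1] expand[of F2] contract_term_add_right sum.distrib)
qed

lemma contract_zero_right: "g \<circ>\<^sub>d (0 :: 'k::field_char_0 mpoly) = 0"
  by (simp add: contract_def)

lemma contract_sum_right: "g \<circ>\<^sub>d (\<Sum>i\<in>S. F i) = (\<Sum>i\<in>S. g \<circ>\<^sub>d (F i :: 'k::field_char_0 mpoly))"
  by (induction S rule: infinite_finite_induct) (auto simp: contract_zero_right contract_add_right)

definition in_var_ideal :: "(nat \<times> nat) set \<Rightarrow> 'k::zero mpoly \<Rightarrow> bool" where
  "in_var_ideal A p \<longleftrightarrow> (\<forall>\<mu>\<in>Poly_Mapping.keys p. Poly_Mapping.keys \<mu> \<inter> A \<noteq> {})"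

lemma in_var_ideal_zero: "in_var_ideal A 0"
  by (simp add: in_var_ideal_def)

lemma in_var_ideal_add: "in_var_ideal A p \<Longrightarrow> in_var_ideal A q \<Longrightarrow> in_var_ideal A (p + q)"
  using keys_add[of p q] unfolding in_var_ideal_def by blast

lemma in_var_ideal_sum: "(\<And>i. i \<in> S \<Longrightarrow> in_var_ideal A (f i)) \<Longrightarrow> in_var_ideal A (\<Sum>i\<in>S. f i)"
  by (induction S rule: infinite_finite_induct) (auto simp: in_var_ideal_zero in_var_ideal_add)

lemma in_var_ideal_mult_left:
  assumes "in_var_ideal A p"
  shows "in_var_ideal A (q * (p :: 'k::comm_ring_1 mpoly))"
  unfolding in_var_ideal_def
proof
  fix \<mu> assume "\<mu> \<in> Poly_Mapping.keys (q * p)"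
  then obtain \<alpha> \<beta> where \<mu>: "\<mu> = \<alpha> + \<beta>" and \<beta>: "\<beta> \<in> Poly_Mapping.keys p"
    using keys_mult[of q p] by blast
  from assms \<beta> have "Poly_Mapping.keys \<beta> \<inter> A \<noteq> {}"
    unfolding in_var_ideal_def by blast
  then show "Poly_Mapping.keys \<mu> \<inter> A \<noteq> {}"
    unfolding \<mu> keys_add_exponents by blast
qed

lemma in_var_ideal_mult_right: "in_var_ideal A p \<Longrightarrow> in_var_ideal A ((p :: 'k::comm_ring_1 mpoly) * q)"
  using in_var_ideal_mult_left[of A p q] by (simp add: mult.commute)

lemma in_var_ideal_gen_ideal:
  assumes "p \<in> gen_ideal R S" "\<And>s. s \<in> S \<Longrightarrow> in_var_ideal A (s :: 'k::comm_ring_1 mpoly)"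
  shows "in_var_ideal A p"
proof -
  obtain L where L: "set L \<subseteq> R \<times> S" "p = sum_list (map (\<lambda>(r, s). r * s) L)"
    using assms(1) unfolding gen_ideal_def by blast
  have "in_var_ideal A (sum_list (map (\<lambda>(r, s). r * s) L))"
    using L(1)
  proof (induction L)
    case (Cons rs L)
    then have "in_var_ideal A (fst rs * snd rs)"
      by (intro in_var_ideal_mult_left assms(2)) auto
    with Cons show ?case
      by (simp add: split_beta in_var_ideal_add)
  qed (simp add: in_var_ideal_zero)
  with L(2) show ?thesis by simp
qed

lemma contract_eq_0_if_in_var_ideal:
  assumes "in_var_ideal A g" "F \<in> polys W" "W \<inter> A = {}"
  shows "g \<circ>\<^sub>d F = 0"
proof -
  have "contract_term g F \<alpha> \<beta> = 0"
    if "\<alpha> \<in> Poly_Mapping.keys g" "\<beta> \<in> Poly_Mapping.keys F" for \<alpha> \<beta>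
  proof -
    from assms(1) that(1) obtain v where "v \<in> Poly_Mapping.keys \<alpha>" "v \<in> A"
      unfolding in_var_ideal_def by blast
    moreover have "v \<notin> Poly_Mapping.keys \<beta>"
      using assms(2,3) that(2) \<open>v \<in> A\<close> unfolding polys_def by blast
    ultimately have "\<not> mono_le \<alpha> \<beta>"
      unfolding mono_le_def by (metis in_keys_iff le_zero_eq)
    then show ?thesis by (simp add: contract_term_def)
  qed
  then show ?thesis
    unfolding contract_def contract_term_def[symmetric] by (simp add: sum.neutral)
qed

lemma polys_mono: "V \<subseteq> W \<Longrightarrow> polys V \<subseteq> polys W"
  unfolding polys_def by blast

lemma polys_const: "const c \<in> polys V"
  by (simp add: polys_def const_def)

lemma polys_zero: "0 \<in> polys V"
  by (simp add: polys_def)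

lemma polys_add: "p \<in> polys V \<Longrightarrow> q \<in> polys V \<Longrightarrow> p + q \<in> polys V"
  using keys_add[of p q] unfolding polys_def by blast

lemma polys_sum: "(\<And>i. i \<in> S \<Longrightarrow> f i \<in> polys V) \<Longrightarrow> (\<Sum>i\<in>S. f i) \<in> polys V"
  by (induction S rule: infinite_finite_induct) (auto simp: polys_zero polys_add)

lemma polys_mult:
  assumes "p \<in> polys V" "q \<in> polys V"
  shows "(p :: 'k::comm_ring_1 mpoly) * q \<in> polys V"
  unfolding polys_def
proof (intro CollectI ballI)
  fix \<mu> assume "\<mu> \<in> Poly_Mapping.keys (p * q)"
  then obtain \<alpha> \<beta> where \<mu>: "\<mu> = \<alpha> + \<beta>"
    and "\<alpha> \<in> Poly_Mapping.keys p" "\<beta> \<in> Poly_Mapping.keys q"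
    using keys_mult[of p q] by blast
  with assms have "Poly_Mapping.keys \<alpha> \<subseteq> V" "Poly_Mapping.keys \<beta> \<subseteq> V"
    unfolding polys_def by blast+
  then show "Poly_Mapping.keys \<mu> \<subseteq> V"
    unfolding \<mu> keys_add_exponents by blast
qed

lemma gen_ideal_mono: "S \<subseteq> S' \<Longrightarrow> gen_ideal R S \<subseteq> gen_ideal R S'"
  unfolding gen_ideal_def by blast

lemma gen_ideal_subset_polys:
  assumes "S \<subseteq> polys V"
  shows "gen_ideal (polys V) S \<subseteq> (polys V :: 'k::comm_ring_1 mpoly set)"
proof
  fix p assume "p \<in> gen_ideal (polys V) S"
  then obtain L where L: "set L \<subseteq> polys V \<times> S" "p = sum_list (map (\<lambda>(r, s). r * s) L)"
    unfolding gen_ideal_def by blast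
  have "sum_list (map (\<lambda>(r, s). r * s) L) \<in> polys V"
    using L(1) assms by (induction L) (auto simp: polys_zero intro!: polys_add polys_mult)
  with L(2) show "p \<in> polys V" by simp
qed

lemma mult_mem_gen_ideal_singleton: "r \<in> R \<Longrightarrow> r * s \<in> gen_ideal R {s}"
  unfolding gen_ideal_def by (intro CollectI exI[of _ "[(r, s)]"]) auto

lemma gen_ideal_singletonE:
  assumes "p \<in> gen_ideal (polys V) {s :: 'k::comm_ring_1 mpoly}"
  obtains r where "r \<in> polys V" "p = r * s"
proof -
  obtain L where L: "set L \<subseteq> polys V \<times> {s}" "p = sum_list (map (\<lambda>(r, s). r * s) L)"
    using assms unfolding gen_ideal_def by blast
  have "sum_list (map (\<lambda>(r, s). r * s) L) = sum_list (map fst L) * s"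
    using L(1) by (induction L) (auto simp: distrib_right)
  moreover have "sum_list (map fst L) \<in> polys V"
    using L(1) by (induction L) (auto simp: polys_zero polys_add)
  ultimately show thesis
    using that L(2) by simp
qed

lemma mdeg_eq_0_iff: "mdeg \<mu> = 0 \<longleftrightarrow> \<mu> = 0"
  unfolding mdeg_def by (auto simp: in_keys_iff intro!: poly_mapping_eqI)

lemma hcomp_0: "hcomp 0 p = const (Poly_Mapping.lookup p 0)"
proof -
  have "{\<mu> \<in> Poly_Mapping.keys p. mdeg \<mu> = 0} = (if 0 \<in> Poly_Mapping.keys p then {0} else {})"
    by (auto simp: mdeg_eq_0_iff)
  then show ?thesis
    unfolding hcomp_def const_def by (auto simp: in_keys_iff)
qed

lemma constant_coeff_eq_0_if_proper_homogeneous: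
  fixes p :: "'k::field mpoly"
  assumes "is_ideal (polys W) I" "1 \<notin> I" "homogeneous_set I" "p \<in> I"
  shows "Poly_Mapping.lookup p 0 = 0"
proof (rule ccontr)
  let ?c = "Poly_Mapping.lookup p 0"
  assume "?c \<noteq> 0"
  have "const ?c \<in> I"
    using assms(3,4) hcomp_0[of p] unfolding homogeneous_set_def by metis
  then have "const (inverse ?c) * const ?c \<in> I"
    using assms(1) polys_const unfolding is_ideal_def by blast
  with \<open>?c \<noteq> 0\<close> have "1 \<in> I"
    by (simp add: const_def mult_single)
  with assms(2) show False ..
qed

lemma in_var_ideal_if_proper_homogeneous:
  assumes "is_ideal (polys W) I" "1 \<notin> I" "homogeneous_set I" "p \<in> I" "W \<subseteq> A"
  shows "in_var_ideal A (p :: 'k::field mpoly)"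
  unfolding in_var_ideal_def
proof
  fix \<mu> assume \<mu>: "\<mu> \<in> Poly_Mapping.keys p"
  have "Poly_Mapping.lookup p 0 = 0"
    using constant_coeff_eq_0_if_proper_homogeneous assms(1-4) .
  with \<mu> have "Poly_Mapping.keys \<mu> \<noteq> {}"
    by (auto simp: in_keys_iff)
  moreover have "Poly_Mapping.keys \<mu> \<subseteq> A"
    using assms(1,4,5) \<mu> unfolding is_ideal_def polys_def by blast
  ultimately show "Poly_Mapping.keys \<mu> \<inter> A \<noteq> {}"
    by blast
qed

lemma contract_sum_eq_0_component:
  assumes "finite S" "i \<in> S" "g \<circ>\<^sub>d (\<Sum>j\<in>S. F j) = 0"
    and "\<And>j. j \<in> S - {i} \<Longrightarrow> g \<circ>\<^sub>d F j = 0"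
  shows "g \<circ>\<^sub>d (F i :: 'k::field_char_0 mpoly) = 0"
proof -
  have "g \<circ>\<^sub>d (\<Sum>j\<in>S. F j) = g \<circ>\<^sub>d F i + (\<Sum>j\<in>S - {i}. g \<circ>\<^sub>d F j)"
    using assms(1,2) by (simp add: sum.remove contract_add_right contract_sum_right)
  with assms(3,4) show ?thesis
    by simp
qed

lemma colon_perp_sum_subset:
  assumes "finite S" "i \<in> S"
    and F: "\<And>j. j \<in> S \<Longrightarrow> F j \<in> polys (W j)"
    and I: "\<And>j p. j \<in> S - {i} \<Longrightarrow> p \<in> I i \<Longrightarrow> in_var_ideal (- W j) p"
  shows "colon (polys V) (perp (polys V) (\<Sum>j\<in>S. F j)) (gen_ideal (polys V) (\<Union>j\<in>S. I j))
         \<subseteq> colon (polys V) (perp (polys V) (F i :: 'k::field_char_0 mpoly)) (gen_ideal (polys V) (I i))"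
proof
  fix g assume g: "g \<in> colon (polys V) (perp (polys V) (\<Sum>j\<in>S. F j)) (gen_ideal (polys V) (\<Union>j\<in>S. I j))"
  have "g * u \<in> perp (polys V) (F i)" if u: "u \<in> gen_ideal (polys V) (I i)" for u
  proof -
    have "u \<in> gen_ideal (polys V) (\<Union>j\<in>S. I j)"
      using u gen_ideal_mono[of "I i" "\<Union>j\<in>S. I j"] assms(2) by blast
    with g have gu: "g * u \<in> polys V" "(g * u) \<circ>\<^sub>d (\<Sum>j\<in>S. F j) = 0"
      unfolding colon_def perp_def by blast+
    have "(g * u) \<circ>\<^sub>d F j = 0" if j: "j \<in> S - {i}" for j
    proof (rule contract_eq_0_if_in_var_ideal)
      show "in_var_ideal (- W j) (g * u)"
        using in_var_ideal_gen_ideal[OF u I[OF j]] by (rule in_var_ideal_mult_left)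
    qed (use F j in auto)
    with gu show ?thesis
      unfolding perp_def using contract_sum_eq_0_component[OF assms(1,2)] by blast
  qed
  with g show "g \<in> colon (polys V) (perp (polys V) (F i)) (gen_ideal (polys V) (I i))"
    unfolding colon_def by blast
qed

lemma colon_perp_add_in_var_ideal:
  assumes g: "g \<in> colon (polys V) (perp (polys V) F) (gen_ideal (polys V) J)"
    and "J \<subseteq> polys V" "F \<in> polys W" "w \<in> polys V" "in_var_ideal (- W) w"
  shows "g + w \<in> colon (polys V) (perp (polys V) (F :: 'k::field_char_0 mpoly)) (gen_ideal (polys V) J)"
proof -
  have gwV: "g + w \<in> polys V"
    using g assms(4) unfolding colon_def by (blast intro: polys_add)
  have "(g + w) * u \<in> perp (polys V) F" if u: "u \<in> gen_ideal (polys V) J" for u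
  proof -
    have "(g * u) \<circ>\<^sub>d F = 0"
      using g u unfolding colon_def perp_def by blast
    moreover have "(w * u) \<circ>\<^sub>d F = 0"
      by (rule contract_eq_0_if_in_var_ideal[OF in_var_ideal_mult_right[OF assms(5)] assms(3)]) auto
    moreover have "(g + w) * u \<in> polys V"
      using gwV gen_ideal_subset_polys[OF assms(2)] u by (blast intro: polys_mult)
    ultimately show ?thesis
      unfolding perp_def by (simp add: distrib_right contract_add_left)
  qed
  with gwV show ?thesis
    unfolding colon_def by blast
qed

lemma gen_ideal_linear_combination_split:
  assumes "h \<in> gen_ideal (polys V) {\<Sum>j\<in>S. const (c j) * t j}" "finite S" "i \<in> S"
    and "\<And>j. j \<in> S \<Longrightarrow> t j \<in> polys V"
    and "\<And>j. j \<in> S - {i} \<Longrightarrow> in_var_ideal A (t j)"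
  obtains w y where "h = y + w" "y \<in> gen_ideal (polys V) {t i :: 'k::comm_ring_1 mpoly}"
    "w \<in> polys V" "in_var_ideal A w"
proof -
  obtain r where r: "r \<in> polys V" "h = r * (\<Sum>j\<in>S. const (c j) * t j)"
    using assms(1) by (rule gen_ideal_singletonE)
  define w where "w = (\<Sum>j\<in>S - {i}. r * const (c j) * t j)"
  have "h = r * const (c i) * t i + w"
    unfolding r(2) w_def sum_distrib_left using assms(2,3)
    by (simp add: sum.remove mult.assoc)
  moreover have "r * const (c i) * t i \<in> gen_ideal (polys V) {t i}"
    by (intro mult_mem_gen_ideal_singleton polys_mult r(1) polys_const)
  moreover have "w \<in> polys V"
    unfolding w_def using assms(4) by (intro polys_sum polys_mult r(1) polys_const) auto
  moreover have "in_var_ideal A w"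
    unfolding w_def using assms(5) by (intro in_var_ideal_sum in_var_ideal_mult_left) auto
  ultimately show thesis
    using that by blast
qed

theorem lemma5p2:
  fixes m d e :: nat and n :: "nat \<Rightarrow> nat"
    and F :: "nat \<Rightarrow> 'k::field_char_0 mpoly" and I :: "nat \<Rightarrow> 'k mpoly set"
    and t :: "nat \<Rightarrow> 'k mpoly" and a :: "nat \<Rightarrow> 'k"
  defines "V \<equiv> {(i, j). 1 \<le> i \<and> i \<le> m \<and> j \<le> n i}"
    and "Vi \<equiv> (\<lambda>i. {(i', j). i' = i \<and> j \<le> n i})"
  assumes "alg_closed_field TYPE('k)"
    and "\<And>i. i \<in> {1..m} \<Longrightarrow> F i \<in> polys (Vi i) \<and> homog d (F i)"
    and "\<And>i. i \<in> {1..m} \<Longrightarrow> is_ideal (polys (Vi i)) (I i) \<and> 1 \<notin> I i \<and> homogeneous_set (I i)"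
    and "\<And>i. i \<in> {1..m} \<Longrightarrow> t i \<in> I i \<and> homog e (t i)"
  shows "ideal_sum (colon (polys V) (perp (polys V) (\<Sum>i=1..m. F i))
                           (gen_ideal (polys V) (\<Union>i\<in>{1..m}. I i)))
                   (gen_ideal (polys V) {\<Sum>i=1..m. const (a i) * t i})
         \<subseteq> (\<Inter>i\<in>{1..m}. ideal_sum (colon (polys V) (perp (polys V) (F i)) (gen_ideal (polys V) (I i)))
                                  (gen_ideal (polys V) {t i}))"
proof (intro subsetI INT_I)
  fix x i assume x: "x \<in> ideal_sum (colon (polys V) (perp (polys V) (\<Sum>i=1..m. F i))
      (gen_ideal (polys V) (\<Union>i\<in>{1..m}. I i))) (gen_ideal (polys V) {\<Sum>i=1..m. const (a i) * t i})"
    and i: "i \<in> {1..m}"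
  note F_block = assms(4) and I_proper = assms(5) and t_in_I = assms(6)
  have I_polys_V: "I j \<subseteq> polys V" if "j \<in> {1..m}" for j
    using I_proper[OF that] polys_mono[of "Vi j" V] that unfolding is_ideal_def V_def Vi_def by auto
  have I_var: "in_var_ideal (- Vi k) p" if "j \<in> {1..m}" "p \<in> I j" "k \<noteq> j" for j k p
    using I_proper[OF that(1)] that by (intro in_var_ideal_if_proper_homogeneous) (auto simp: Vi_def)
  from x obtain g h where "x = g + h"
    and g: "g \<in> colon (polys V) (perp (polys V) (\<Sum>i=1..m. F i)) (gen_ideal (polys V) (\<Union>i\<in>{1..m}. I i))"
    and h: "h \<in> gen_ideal (polys V) {\<Sum>i=1..m. const (a i) * t i}"
    unfolding ideal_sum_def by blast
  have t_polys_V: "t j \<in> polys V" if "j \<in> {1..m}" for j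
    using I_polys_V[OF that] t_in_I[OF that] by blast
  have t_var: "in_var_ideal (- Vi i) (t j)" if "j \<in> {1..m} - {i}" for j
    using that t_in_I[of j] by (intro I_var[of j _ i]) auto
  obtain w y where "h = y + w" and y: "y \<in> gen_ideal (polys V) {t i}"
    and w: "w \<in> polys V" "in_var_ideal (- Vi i) w"
    by (rule gen_ideal_linear_combination_split[OF h finite_atLeastAtMost i t_polys_V t_var])
  have "g \<in> colon (polys V) (perp (polys V) (F i)) (gen_ideal (polys V) (I i))"
  proof (rule colon_perp_sum_subset[OF finite_atLeastAtMost i, THEN subsetD, OF _ _ g])
    show "F j \<in> polys (Vi j)" if "j \<in> {1..m}" for j
      using F_block[OF that] by blast
    show "in_var_ideal (- Vi j) p" if "j \<in> {1..m} - {i}" "p \<in> I i" for j p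
      using that by (intro I_var[OF i]) auto
  qed
  then have "g + w \<in> colon (polys V) (perp (polys V) (F i)) (gen_ideal (polys V) (I i))"
    by (rule colon_perp_add_in_var_ideal[OF _ I_polys_V[OF i] F_block[OF i, THEN conjunct1] w])
  moreover have "x = (g + w) + y"
    by (simp add: \<open>x = g + h\<close> \<open>h = y + w\<close> add_ac)
  ultimately show "x \<in> ideal_sum (colon (polys V) (perp (polys V) (F i))
      (gen_ideal (polys V) (I i))) (gen_ideal (polys V) {t i})"
    using y unfolding ideal_sum_def by blast
qed

end
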